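(* Consider Algorithm MWHVC (described in the context) run on a hypergraph $G=(V,E)$ of rank $f$ with vertex weights $w$, with parameters $\varepsilon\in(0,1]$, $\beta=\varepsilon/(f+\varepsilon)$ and multiplier $\alpha>1$. For every iteration $i\ge 0$ and every vertex $v\notin C$ (at iteration $i$), we have $\sum_{e\in E'(v)} \mathrm{deal}_i(e)\le \beta\cdot w(v)$, where $E'(v)$ is the set of hyperedges containing $v$ that are still uncovered in iteration $i$.
   Context: Let $G=(V,E)$ be a hypergraph: each hyperedge is a nonempty subset of $V$ of size at most $f$ (rank $f$). Vertices have nonnegative weights $w(v)$. For $v\in V$, $E(v)=\{e\in E: v\in e\}$; $\Delta=\max_v |E(v)|\ge 3$. A hyperedge $e$ is covered by $C\subseteq V$ if $e\cap C\neq\emptyset$. The computation is distributed in synchronous rounds on the bipartite network with node set $V\cup E$ and a link between $v$ and $e$ iff $v\in e$. Parameters: $\varepsilon\in(0,1]$, $\beta=\varepsilon/(f+\varepsilon)$, and a multiplier $\alpha>1$. Algorithm MWHVC: Initialize $C\gets\emptyset$ and $E'(v)\gets E(v)$ for every $v$. Iteration $0$: every hyperedge $e$ sets $\mathrm{deal}_0(e)=\beta\cdot\min_{v\in e} w(v)/|E(v)|$ and $\delta_0(e)=\mathrm{deal}_0(e)$. For $i=1,2,\dots$: (a) every vertex $v\notin C$ (not terminated) checks whether $\sum_{e\in E(v)}\delta_{i-1}(e)\ge(1-\beta)w(v)$; if so, $v$ joins $C$, tells every $e\in E'(v)$ that $e$ is covered, and terminates. (b) Every uncovered hyperedge that receives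 such a message becomes covered, informs all its vertices, and terminates. (c) Every vertex $v\notin C$ that is told $e$ is covered sets $E'(v)\gets E'(v)\setminus\{e\}$; if $E'(v)=\emptyset$, $v$ terminates without joining $C$. (d) Every vertex $v\notin C$ sends "raise" to all $e\in E'(v)$ if $\sum_{e\in E'(v)}\mathrm{deal}_{i-1}(e)\le(\beta/\alpha)w(v)$, and otherwise sends "stuck" to all $e\in E'(v)$. (e) Every uncovered hyperedge $e$ sets $\mathrm{deal}_i(e)=\mathrm{deal}_{i-1}(e)$ if it received some "stuck" message, and $\mathrm{deal}_i(e)=\alpha\cdot\mathrm{deal}_{i-1}(e)$ otherwise, and $\delta_i(e)=\delta_{i-1}(e)+\mathrm{deal}_i(e)$. If $e$ becomes covered in iteration $j$, then by convention $\delta_i(e)=\delta_{j-1}(e)$ for all $i\ge j$. *)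

theory Defs
  imports Complex_Main
begin

text \<open>State of algorithm MWHVC at the end of an iteration:
  the cover C, the set of covered hyperedges, the set of vertices that terminated
  without joining C, and the current values deal and delta of every hyperedge.\<close>

record 'v mwstate =
  inC   :: "'v set"
  cov   :: "'v set set"
  termd :: "'v set"
  deal  :: "'v set \<Rightarrow> real"
  delta :: "'v set \<Rightarrow> real"

definition Ev :: "'v set set \<Rightarrow> 'v \<Rightarrow> 'v set set" where
  "Ev E v = {e \<in> E. v \<in> e}"

definition Eprime :: "'v set set \<Rightarrow> 'v mwstate \<Rightarrow> 'v \<Rightarrow> 'v set set" where
  "Eprime E s v = {e \<in> Ev E v. e \<notin> cov s}"

definition mw_init ::
  "'v set set \<Rightarrow> ('v \<Rightarrow> real) \<Rightarrow> real \<Rightarrow> 'v mwstate" where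
  "mw_init E w \<beta> =
     (let d = (\<lambda>e. \<beta> * Min ((\<lambda>u. w u / real (card (Ev E u))) ` e))
      in \<lparr> inC = {}, cov = {}, termd = {}, deal = d, delta = d \<rparr>)"

definition mw_step ::
  "'v set \<Rightarrow> 'v set set \<Rightarrow> ('v \<Rightarrow> real) \<Rightarrow> real \<Rightarrow> real \<Rightarrow> 'v mwstate \<Rightarrow> 'v mwstate" where
  "mw_step V E w \<beta> \<alpha> s =
     (let
        \<comment> \<open>(a) active vertices whose check succeeds join C\<close>
        J = {v \<in> V. v \<notin> inC s \<and> v \<notin> termd s \<and>
                    (\<Sum>e\<in>Ev E v. delta s e) \<ge> (1 - \<beta>) * w v};
        \<comment> \<open>(b) uncovered hyperedges receiving a message become covered\<close>
        newcov = {e \<in> E. e \<notin> cov s \<and> (\<exists>v\<in>J. v \<in> e)};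
        cov' = cov s \<union> newcov;
        C' = inC s \<union> J;
        \<comment> \<open>(c) vertices told of coverage update E'(v) and may terminate\<close>
        termd' = termd s \<union> {v \<in> V. v \<notin> C' \<and> (\<exists>e\<in>newcov. v \<in> e) \<and>
                                   {e \<in> Ev E v. e \<notin> cov'} = {}};
        active = (\<lambda>v. v \<in> V \<and> v \<notin> C' \<and> v \<notin> termd');
        \<comment> \<open>(d) raise / stuck\<close>
        raise = (\<lambda>v. (\<Sum>e\<in>{e \<in> Ev E v. e \<notin> cov'}. deal s e) \<le> (\<beta> / \<alpha>) * w v);
        \<comment> \<open>(e) update of deal and delta for uncovered hyperedges\<close>
        deal' = (\<lambda>e. if e \<in> E \<and> e \<notin> cov' then
                        (if (\<exists>v\<in>e. active v \<and> \<not> raise v) then deal s e else \<alpha> * deal s e)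
                      else deal s e);
        delta' = (\<lambda>e. if e \<in> E \<and> e \<notin> cov' then delta s e + deal' e else delta s e)
      in \<lparr> inC = C', cov = cov', termd = termd', deal = deal', delta = delta' \<rparr>)"

primrec mwhvc ::
  "'v set \<Rightarrow> 'v set set \<Rightarrow> ('v \<Rightarrow> real) \<Rightarrow> real \<Rightarrow> real \<Rightarrow> nat \<Rightarrow> 'v mwstate" where
  "mwhvc V E w \<beta> \<alpha> 0 = mw_init E w \<beta>"
| "mwhvc V E w \<beta> \<alpha> (Suc i) = mw_step V E w \<beta> \<alpha> (mwhvc V E w \<beta> \<alpha> i)"

end

theory Submission
  imports Defs
begin

(* The bound is an invariant of the iteration, proved together with two auxiliary invariants:
   all deals are nonnegative, and a vertex that terminated outside C has no uncovered hyperedge.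
   Initially deal_0(e) <= beta w(v) / |E(v)| for every e containing v, so the sum over E(v) is at
   most beta w(v). In an iteration, E'(v) can only shrink. If v says "raise", the old sum was at
   most (beta/alpha) w(v) and each deal grows by at most the factor alpha; if v says "stuck", none
   of its uncovered hyperedges changes its deal. *)

lemma Eprime_subset: "Eprime E s v \<subseteq> E"
  unfolding Eprime_def Ev_def by auto

lemma finite_Eprime: "finite E \<Longrightarrow> finite (Eprime E s v)"
  by (rule finite_subset[OF Eprime_subset])

lemma Eprime_antimono: "cov s \<subseteq> cov s' \<Longrightarrow> Eprime E s' v \<subseteq> Eprime E s v"
  unfolding Eprime_def by auto

lemma cov_mw_step: "cov s \<subseteq> cov (mw_step V E w \<beta> \<alpha> s)"
  unfolding mw_step_def Let_def by simp

lemma inC_mw_step: "inC s \<subseteq> inC (mw_step V E w \<beta> \<alpha> s)"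
  unfolding mw_step_def Let_def by simp

lemma Eprime_mw_step_subset: "Eprime E (mw_step V E w \<beta> \<alpha> s) v \<subseteq> Eprime E s v"
  by (rule Eprime_antimono[OF cov_mw_step])

lemma termd_mw_step:
  assumes "v \<in> termd (mw_step V E w \<beta> \<alpha> s)" and "v \<notin> termd s"
  shows "Eprime E (mw_step V E w \<beta> \<alpha> s) v = {}"
  using assms unfolding mw_step_def Let_def Eprime_def by simp

lemma deal_mw_step:
  fixes V E w \<beta> \<alpha> s
  defines "s' \<equiv> mw_step V E w \<beta> \<alpha> s"
  shows "deal s' e =
    (if e \<in> E \<and> e \<notin> cov s' then
       (if \<exists>u\<in>e. u \<in> V \<and> u \<notin> inC s' \<and> u \<notin> termd s' \<and>
              \<not> (\<Sum>e\<in>Eprime E s' u. deal s e) \<le> (\<beta> / \<alpha>) * w u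
        then deal s e else \<alpha> * deal s e)
     else deal s e)"
  unfolding s'_def mw_step_def Let_def Eprime_def by auto

lemma deal_mw_step_ge:
  assumes "deal s e \<ge> 0" and "\<alpha> \<ge> 1"
  shows "deal s e \<le> deal (mw_step V E w \<beta> \<alpha> s) e"
  using assms mult_right_mono[of 1 \<alpha> "deal s e"] by (simp add: deal_mw_step)

lemma deal_mw_step_le:
  assumes "deal s e \<ge> 0" and "\<alpha> \<ge> 1"
  shows "deal (mw_step V E w \<beta> \<alpha> s) e \<le> \<alpha> * deal s e"
  using assms mult_right_mono[of 1 \<alpha> "deal s e"] by (simp add: deal_mw_step)

lemma deal_mw_step_stuck:
  fixes V E w \<beta> \<alpha> s
  defines "s' \<equiv> mw_step V E w \<beta> \<alpha> s"
  assumes "v \<in> V" "v \<notin> inC s'" "v \<notin> termd s'" "e \<in> Eprime E s' v"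
    and "\<not> (\<Sum>e\<in>Eprime E s' v. deal s e) \<le> (\<beta> / \<alpha>) * w v"
  shows "deal s' e = deal s e"
proof -
  have "e \<in> E" "e \<notin> cov s'" "v \<in> e"
    using \<open>e \<in> Eprime E s' v\<close> unfolding Eprime_def Ev_def by auto
  moreover have "\<exists>u\<in>e. u \<in> V \<and> u \<notin> inC s' \<and> u \<notin> termd s' \<and>
      \<not> (\<Sum>e\<in>Eprime E s' u. deal s e) \<le> (\<beta> / \<alpha>) * w u"
    using assms(2-4,6) \<open>v \<in> e\<close> by blast
  ultimately show ?thesis unfolding s'_def deal_mw_step by simp
qed

definition mw_invariant :: "'v set \<Rightarrow> 'v set set \<Rightarrow> ('v \<Rightarrow> real) \<Rightarrow> real \<Rightarrow> 'v mwstate \<Rightarrow> bool"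
  where "mw_invariant V E w \<beta> s \<longleftrightarrow>
    (\<forall>e\<in>E. deal s e \<ge> 0) \<and> (\<forall>v\<in>termd s. Eprime E s v = {}) \<and>
    (\<forall>v\<in>V. v \<notin> inC s \<longrightarrow> (\<Sum>e\<in>Eprime E s v. deal s e) \<le> \<beta> * w v)"

lemma mw_invariant_mw_init:
  assumes "finite V" and "finite E" and "\<forall>e\<in>E. e \<noteq> {} \<and> e \<subseteq> V"
    and "\<forall>v\<in>V. w v \<ge> 0" and "\<beta> \<ge> 0"
  shows "mw_invariant V E w \<beta> (mw_init E w \<beta>)"
proof -
  define share where "share u = w u / real (card (Ev E u))" for u
  define d where "d e = \<beta> * Min (share ` e)" for e
  have init: "mw_init E w \<beta> = \<lparr> inC = {}, cov = {}, termd = {}, deal = d, delta = d \<rparr>"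
    unfolding mw_init_def d_def share_def Let_def by simp
  have finite_edge: "finite e" if "e \<in> E" for e
    using that assms(1,3) finite_subset by blast
  have "d e \<ge> 0" if "e \<in> E" for e
  proof -
    have "\<forall>u\<in>e. share u \<ge> 0"
      using that assms(3,4) unfolding share_def by (fastforce intro: divide_nonneg_nonneg)
    then have "Min (share ` e) \<ge> 0"
      using finite_edge[OF that] assms(3) that by simp
    then show ?thesis unfolding d_def using assms(5) by simp
  qed
  moreover have "(\<Sum>e\<in>Ev E v. d e) \<le> \<beta> * w v" if "v \<in> V" for v
  proof (cases "Ev E v = {}")
    case False
    have "(\<Sum>e\<in>Ev E v. d e) \<le> (\<Sum>e\<in>Ev E v. \<beta> * share v)"
    proof (rule sum_mono)
      fix e assume "e \<in> Ev E v"
      then have "Min (share ` e) \<le> share v"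
        using finite_edge unfolding Ev_def by (intro Min_le) auto
      then show "d e \<le> \<beta> * share v"
        unfolding d_def using assms(5) by (rule mult_left_mono)
    qed
    also have "\<dots> = \<beta> * w v"
      using False \<open>finite E\<close> unfolding share_def Ev_def by simp
    finally show ?thesis .
  qed (use assms(4,5) that in simp)
  ultimately show ?thesis unfolding mw_invariant_def init by (simp add: Eprime_def)
qed

lemma sum_deal_mw_step_le:
  fixes V E w \<beta> \<alpha> s
  defines "s' \<equiv> mw_step V E w \<beta> \<alpha> s"
  assumes "finite E" and deal_nonneg: "\<And>e. e \<in> E \<Longrightarrow> deal s e \<ge> 0" and "\<alpha> \<ge> 1"
    and "v \<in> V" "v \<notin> inC s'" "v \<notin> termd s'"
    and bound: "(\<Sum>e\<in>Eprime E s v. deal s e) \<le> \<beta> * w v"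
  shows "(\<Sum>e\<in>Eprime E s' v. deal s' e) \<le> \<beta> * w v"
proof (cases "(\<Sum>e\<in>Eprime E s' v. deal s e) \<le> (\<beta> / \<alpha>) * w v")
  case raise: True
  have "deal s e \<ge> 0" if "e \<in> Eprime E s' v" for e
    by (rule deal_nonneg[OF subsetD[OF Eprime_subset that]])
  then have "(\<Sum>e\<in>Eprime E s' v. deal s' e) \<le> (\<Sum>e\<in>Eprime E s' v. \<alpha> * deal s e)"
    unfolding s'_def using \<open>\<alpha> \<ge> 1\<close> by (intro sum_mono deal_mw_step_le)
  also have "\<dots> = \<alpha> * (\<Sum>e\<in>Eprime E s' v. deal s e)"
    by (simp add: sum_distrib_left)
  also have "\<dots> \<le> \<alpha> * ((\<beta> / \<alpha>) * w v)"
    using raise \<open>\<alpha> \<ge> 1\<close> by (intro mult_left_mono) simp_all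
  also have "\<dots> = \<beta> * w v"
    using \<open>\<alpha> \<ge> 1\<close> by simp
  finally show ?thesis .
next
  case stuck: False
  have "(\<Sum>e\<in>Eprime E s' v. deal s' e) = (\<Sum>e\<in>Eprime E s' v. deal s e)"
    using deal_mw_step_stuck[OF \<open>v \<in> V\<close> assms(6,7)[unfolded s'_def] _ stuck[unfolded s'_def]]
    unfolding s'_def by (rule sum.cong[OF refl])
  also have "\<dots> \<le> (\<Sum>e\<in>Eprime E s v. deal s e)"
  proof (rule sum_mono2)
    show "finite (Eprime E s v)" using \<open>finite E\<close> by (rule finite_Eprime)
    show "\<And>e. e \<in> Eprime E s v - Eprime E s' v \<Longrightarrow> 0 \<le> deal s e"
      by (rule deal_nonneg[OF subsetD[OF Eprime_subset DiffD1]])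
  qed (unfold s'_def, rule Eprime_mw_step_subset)
  also have "\<dots> \<le> \<beta> * w v"
    by (rule bound)
  finally show ?thesis .
qed

lemma mw_invariant_mw_step:
  assumes inv: "mw_invariant V E w \<beta> s" and "finite E"
    and "\<forall>v\<in>V. w v \<ge> 0" and "\<beta> \<ge> 0" and "\<alpha> \<ge> 1"
  shows "mw_invariant V E w \<beta> (mw_step V E w \<beta> \<alpha> s)"
proof -
  let ?s' = "mw_step V E w \<beta> \<alpha> s"
  have deal_nonneg: "\<And>e. e \<in> E \<Longrightarrow> deal s e \<ge> 0"
    and termd_done: "\<And>v. v \<in> termd s \<Longrightarrow> Eprime E s v = {}"
    and bound: "\<And>v. v \<in> V \<Longrightarrow> v \<notin> inC s \<Longrightarrow> (\<Sum>e\<in>Eprime E s v. deal s e) \<le> \<beta> * w v"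
    using inv unfolding mw_invariant_def by auto
  have deal_nonneg': "deal ?s' e \<ge> 0" if "e \<in> E" for e
    using deal_nonneg[OF that] deal_mw_step_ge[OF deal_nonneg[OF that] \<open>\<alpha> \<ge> 1\<close>]
    by (rule order_trans)
  have termd_done': "Eprime E ?s' v = {}" if "v \<in> termd ?s'" for v
  proof (cases "v \<in> termd s")
    case True
    then show ?thesis using termd_done[OF True] Eprime_mw_step_subset[of E V w \<beta> \<alpha> s v] by blast
  next
    case False
    with that show ?thesis by (rule termd_mw_step)
  qed
  have bound': "(\<Sum>e\<in>Eprime E ?s' v. deal ?s' e) \<le> \<beta> * w v" if "v \<in> V" "v \<notin> inC ?s'" for v
  proof (cases "v \<in> termd ?s'")
    case True
    then show ?thesis using termd_done' assms(3,4) \<open>v \<in> V\<close> by simp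
  next
    case False
    have "v \<notin> inC s" using \<open>v \<notin> inC ?s'\<close> inC_mw_step[of s V E w \<beta> \<alpha>] by blast
    with that False show ?thesis
      by (intro sum_deal_mw_step_le \<open>finite E\<close> deal_nonneg \<open>\<alpha> \<ge> 1\<close> bound)
  qed
  show ?thesis
    unfolding mw_invariant_def using deal_nonneg' termd_done' bound' by blast
qed

lemma mw_invariant_mwhvc:
  assumes "finite V" and "finite E" and "\<forall>e\<in>E. e \<noteq> {} \<and> e \<subseteq> V"
    and "\<forall>v\<in>V. w v \<ge> 0" and "\<beta> \<ge> 0" and "\<alpha> \<ge> 1"
  shows "mw_invariant V E w \<beta> (mwhvc V E w \<beta> \<alpha> i)"
proof (induction i)
  case 0
  show ?case using mw_invariant_mw_init[OF assms(1,2,3,4,5)] by simp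
next
  case (Suc i)
  then show ?case using mw_invariant_mw_step[OF _ assms(2,4,5,6)] by simp
qed

theorem mainTheorem1:
  fixes V :: "'v set" and E :: "'v set set" and w :: "'v \<Rightarrow> real"
    and f :: nat and \<epsilon> \<alpha> \<beta> :: real
  assumes "finite V" and "finite E"
    and "\<forall>e\<in>E. e \<noteq> {} \<and> e \<subseteq> V \<and> card e \<le> f"
    and "\<forall>v\<in>V. w v \<ge> 0"
    and "Max ((\<lambda>v. card (Ev E v)) ` V) \<ge> 3"
    and "0 < \<epsilon>" and "\<epsilon> \<le> 1"
    and "\<beta> = \<epsilon> / (real f + \<epsilon>)"
    and "\<alpha> > 1"
  shows "\<forall>i. \<forall>v\<in>V. v \<notin> inC (mwhvc V E w \<beta> \<alpha> i) \<longrightarrow>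
           (\<Sum>e\<in>Eprime E (mwhvc V E w \<beta> \<alpha> i) v. deal (mwhvc V E w \<beta> \<alpha> i) e) \<le> \<beta> * w v"
proof -
  have edges: "\<forall>e\<in>E. e \<noteq> {} \<and> e \<subseteq> V" using assms(3) by blast
  have "\<beta> \<ge> 0" using \<open>0 < \<epsilon>\<close> \<open>\<beta> = \<epsilon> / (real f + \<epsilon>)\<close> by simp
  moreover have "\<alpha> \<ge> 1" using \<open>\<alpha> > 1\<close> by simp
  ultimately have "mw_invariant V E w \<beta> (mwhvc V E w \<beta> \<alpha> i)" for i
    by (rule mw_invariant_mwhvc[OF assms(1,2) edges assms(4)])
  then show ?thesis unfolding mw_invariant_def by blast
qed

end
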